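(* For every nonzero $\lambda\in\mathbb{C}$, the function $f_\lambda(t)=\frac{1}{(1-\lambda t)(1-\lambda^{-1}t)}$ is symplectic at $t=1$ of order $2$.
   Context: A formal power series $\varphi(x)=\sum_{i\ge0}\gamma_i x^i\in\mathbb{C}[[x]]$ is called symplectic if for every $m\ge1$ one has $\sum_{k=0}^{m-1}(-1)^k\binom{m-1}{k}\gamma_{m+k}=0$. A meromorphic function $\psi(t)$ whose pole at $t=a$ has order at most $d$ is called symplectic at $a$ of order $d$ if the formal power series $x^d\psi(a-x)\in\mathbb{C}[[x]]$ is symplectic. *)

theory Defs
  imports "HOL-Complex_Analysis.Complex_Analysis"
begin

definition symplectic_fps :: "complex fps \<Rightarrow> bool" where
  "symplectic_fps \<phi> \<longleftrightarrow>
     (\<forall>m::nat. m \<ge> 1 \<longrightarrow>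
        (\<Sum>k<m. (-1) ^ k * of_nat ((m - 1) choose k) * fps_nth \<phi> (m + k)) = 0)"

definition symplectic_at :: "(complex \<Rightarrow> complex) \<Rightarrow> complex \<Rightarrow> nat \<Rightarrow> bool" where
  "symplectic_at \<psi> a d \<longleftrightarrow>
     (\<exists>\<phi>. ((\<lambda>x. x ^ d * \<psi> (a - x)) has_laurent_expansion fps_to_fls \<phi>)
          \<and> symplectic_fps \<phi>)"

end

theory Submission
  imports Defs
begin

text \<open>Substituting t = 1 - x gives x^2 f(1 - x) = x^2 / (x^2 + \<mu> x - \<mu>) with
  \<mu> = (1 - \<lambda>)^2 / \<lambda>, so the coefficients \<gamma> of the expansion satisfy \<gamma>(1) = 0 and
  \<gamma>(j) = \<mu> (\<gamma>(j+2) - \<gamma>(j+1)) for j \<ge> 1. The m-th symplectic sum is the value at 0 of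
  the (m-1)-fold iterate of the operator T \<delta> = \<delta>(_+1) - \<delta>(_+2) applied to the shifted
  sequence \<delta>(i) = \<gamma>(i+1). The recurrence makes \<delta> an eigenvector of T, so that sum is a
  multiple of \<gamma>(1) = 0.\<close>

lemma alternating_binomial_sum_Suc:
  fixes a :: "nat \<Rightarrow> 'a::comm_ring_1"
  shows "(\<Sum>k\<le>Suc n. (-1) ^ k * of_nat (Suc n choose k) * a k)
       = (\<Sum>k\<le>n. (-1) ^ k * of_nat (n choose k) * (a k - a (Suc k)))"
proof -
  have shift: "(\<Sum>k\<le>n. (-1) ^ k * of_nat (n choose Suc k) * a (Suc k))
      = a 0 - (\<Sum>k\<le>n. (-1) ^ k * of_nat (n choose k) * a k)"
    using sum.atMost_Suc_shift[of "\<lambda>k. (-1) ^ k * of_nat (n choose k) * a k" n]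
    by (simp add: sum_negf binomial_eq_0 eq_diff_eq add.commute)
  have "(\<Sum>k\<le>Suc n. (-1) ^ k * of_nat (Suc n choose k) * a k)
      = a 0 - (\<Sum>k\<le>n. (-1) ^ k * of_nat (n choose k) * a (Suc k))
            - (\<Sum>k\<le>n. (-1) ^ k * of_nat (n choose Suc k) * a (Suc k))"
    by (subst sum.atMost_Suc_shift) (simp add: ring_distribs sum_subtractf sum_negf)
  also have "\<dots> = (\<Sum>k\<le>n. (-1) ^ k * of_nat (n choose k) * (a k - a (Suc k)))"
    unfolding shift by (simp add: right_diff_distrib sum_subtractf)
  finally show ?thesis .
qed

lemma alternating_binomial_sum_eigen:
  fixes \<delta> :: "nat \<Rightarrow> 'a::comm_ring_1"
  assumes eigen: "\<And>i. \<delta> (i + 1) - \<delta> (i + 2) = \<rho> * \<delta> i"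
  shows "(\<Sum>k\<le>n. (-1) ^ k * of_nat (n choose k) * \<delta> (i + n + k)) = \<rho> ^ n * \<delta> i"
proof (induction n arbitrary: i)
  case 0
  then show ?case by simp
next
  case (Suc n)
  have "(\<Sum>k\<le>Suc n. (-1) ^ k * of_nat (Suc n choose k) * \<delta> (i + Suc n + k))
      = (\<Sum>k\<le>n. (-1) ^ k * of_nat (n choose k) * \<delta> ((i + 1) + n + k))
        - (\<Sum>k\<le>n. (-1) ^ k * of_nat (n choose k) * \<delta> ((i + 2) + n + k))"
    by (subst alternating_binomial_sum_Suc) (simp add: right_diff_distrib sum_subtractf)
  also have "\<dots> = \<rho> ^ n * (\<delta> (i + 1) - \<delta> (i + 2))"
    by (simp only: Suc right_diff_distrib)
  also have "\<dots> = \<rho> ^ Suc n * \<delta> i"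
    unfolding eigen by simp
  finally show ?case .
qed

lemma symplectic_fps_if_eigen:
  assumes eigen: "\<And>j. j \<ge> 1 \<Longrightarrow> fps_nth \<phi> (j + 1) - fps_nth \<phi> (j + 2) = \<rho> * fps_nth \<phi> j"
    and first: "fps_nth \<phi> 1 = 0"
  shows "symplectic_fps \<phi>"
  unfolding symplectic_fps_def
proof (intro allI impI)
  fix m :: nat
  assume "m \<ge> 1"
  then obtain n where m: "m = Suc n" by (cases m) auto
  have shifted_eigen: "fps_nth \<phi> (i + 1 + 1) - fps_nth \<phi> (i + 2 + 1) = \<rho> * fps_nth \<phi> (i + 1)"
    for i
    using eigen[of "i + 1"] by (simp add: add_ac)
  have "(\<Sum>k\<le>n. (-1) ^ k * of_nat (n choose k) * fps_nth \<phi> (0 + n + k + 1))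
      = \<rho> ^ n * fps_nth \<phi> (0 + 1)"
    by (rule alternating_binomial_sum_eigen[where \<delta> = "\<lambda>j. fps_nth \<phi> (j + 1)", OF shifted_eigen])
  then show "(\<Sum>k<m. (-1) ^ k * of_nat ((m - 1) choose k) * fps_nth \<phi> (m + k)) = 0"
    using first by (simp add: m lessThan_Suc_atMost)
qed

lemma has_laurent_expansion_fps_divide:
  fixes F G :: "complex fps"
  assumes "f has_laurent_expansion fps_to_fls F" "g has_laurent_expansion fps_to_fls G" "G dvd F"
  shows "(\<lambda>x. f x / g x) has_laurent_expansion fps_to_fls (F div G)"
proof -
  have "fps_to_fls F / fps_to_fls G = fps_to_fls (F div G)"
  proof (cases "G = 0")
    case False
    from \<open>G dvd F\<close> have "fps_to_fls F = fps_to_fls (F div G) * fps_to_fls G"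
      by (simp flip: fls_times_fps_to_fls)
    with False show ?thesis by simp
  qed (use \<open>G dvd F\<close> in simp)
  with has_laurent_expansion_divide[OF assms(1,2)] show ?thesis by simp
qed

lemma quadratic_dvd_fps_X_power2:
  fixes \<mu> :: complex
  shows "fps_X^2 + fps_const \<mu> * fps_X - fps_const \<mu> dvd fps_X^2"
proof -
  let ?P = "fps_X^2 + fps_const \<mu> * fps_X - fps_const \<mu> :: complex fps"
  have "fps_nth ?P 2 = 1" by simp
  then have "?P \<noteq> 0" and "subdegree ?P \<le> 2"
    by (metis fps_zero_nth zero_neq_one) (simp add: subdegree_leI)
  then show ?thesis by (simp add: fps_dvd_iff)
qed

lemma has_laurent_expansion_quadratic_quotient:
  fixes \<mu> :: complex
  shows "(\<lambda>x. x^2 / (x^2 + \<mu> * x - \<mu>)) has_laurent_expansion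
           fps_to_fls (fps_X^2 div (fps_X^2 + fps_const \<mu> * fps_X - fps_const \<mu>))"
  by (intro has_laurent_expansion_fps_divide quadratic_dvd_fps_X_power2 has_laurent_expansion_fps
      fps_expansion_intros)

lemma quadratic_quotient_coeffs:
  fixes \<phi> :: "complex fps"
  assumes "\<phi> * (fps_X^2 + fps_const \<mu> * fps_X - fps_const \<mu>) = fps_X^2"
  shows "fps_nth \<phi> 1 = 0"
    and "j \<ge> 1 \<Longrightarrow> fps_nth \<phi> (j + 1) - fps_nth \<phi> (j + 2) = - inverse \<mu> * fps_nth \<phi> j"
proof -
  have coeff: "fps_nth (\<phi> * fps_X^2 + fps_const \<mu> * (\<phi> * fps_X) - fps_const \<mu> * \<phi>) n
      = fps_nth (fps_X^2) n" for n
    using assms by (simp add: algebra_simps)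
  have recurrence: "fps_nth \<phi> j = \<mu> * (fps_nth \<phi> (j + 2) - fps_nth \<phi> (j + 1))" if "j \<ge> 1" for j
    using coeff[of "j + 2"] that by (simp add: fps_X_power_mult_right_nth algebra_simps)
  show "fps_nth \<phi> 1 = 0"
  proof (cases "\<mu> = 0")
    case True
    then show ?thesis using recurrence[of 1] by simp
  next
    case False
    then show ?thesis using coeff[of 0] coeff[of 1] by (simp add: fps_X_power_mult_right_nth)
  qed
  show "fps_nth \<phi> (j + 1) - fps_nth \<phi> (j + 2) = - inverse \<mu> * fps_nth \<phi> j" if "j \<ge> 1"
  proof (cases "\<mu> = 0")
    case True
    \<comment> \<open>here \<phi> = 1 (the case \<lambda> = 1), so both sides vanish; note inverse 0 = 0\<close>
    then show ?thesis using recurrence[of "j + 1"] recurrence[of "j + 2"] by simp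
  next
    case False
    then show ?thesis using recurrence[OF that] by (simp add: field_simps)
  qed
qed

theorem lemma6p1:
  fixes l :: complex
  assumes "l \<noteq> 0"
  shows "symplectic_at (\<lambda>t. 1 / ((1 - l * t) * (1 - inverse l * t))) 1 2"
proof -
  define \<mu> where "\<mu> = (1 - l)^2 / l"
  define P where "P = fps_X^2 + fps_const \<mu> * fps_X - fps_const \<mu>"
  define \<phi> where "\<phi> = fps_X^2 div P"
  have denominator: "(1 - l * (1 - x)) * (1 - inverse l * (1 - x)) = x^2 + \<mu> * x - \<mu>" for x
    using assms by (simp add: \<mu>_def field_simps power2_eq_square)
  have expansion: "(\<lambda>x. x^2 * (1 / ((1 - l * (1 - x)) * (1 - inverse l * (1 - x)))))
      has_laurent_expansion fps_to_fls \<phi>"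
    using has_laurent_expansion_quadratic_quotient[of \<mu>]
    unfolding denominator \<phi>_def P_def by simp
  have "\<phi> * P = fps_X^2"
    unfolding \<phi>_def P_def by (rule dvd_div_mult_self[OF quadratic_dvd_fps_X_power2])
  then have "symplectic_fps \<phi>"
    unfolding P_def
    by (intro symplectic_fps_if_eigen[where \<rho> = "- inverse \<mu>"] quadratic_quotient_coeffs)
  with expansion show ?thesis
    unfolding symplectic_at_def by blast
qed

end
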